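(* Let $\mu\in\mathcal P_c^*(\mathbb R^2)$, $\mathbf A\in\mathrm{GL}(2)$, $\mathbf y\in\mathbb R^2$ and $\mu_{\mathbf A,\mathbf y}=(\mathbf A\cdot+\mathbf y)_\#\mu$. Then $\mathcal N_{\mathrm m}[\mu_{\mathbf A,\mathbf y}]=\mathcal N_{\mathrm m}[\mu]$.
   Context: $\mathbb S_1=\{x\in\mathbb R^2:\|x\|=1\}$; $\mathcal R_\theta[\mu]=(\langle\cdot,\theta\rangle)_\#\mu$. Fix a reference Borel probability measure $\rho$ on $\mathbb R$ without atoms. For a probability measure $\nu$ on $\mathbb R$ with $F_\nu(t)=\nu((-\infty,t])$, $F_\nu^{[-1]}(t)=\inf\{s:F_\nu(s)>t\}$ and the CDT is $\hat\nu=F_\nu^{[-1]}\circ F_\rho$; $\widehat{\mathcal R}_\theta[\mu]$ is the CDT of $\mathcal R_\theta[\mu]$. For $g\in L^2_\rho(\mathbb R)$, $\operatorname{mean}(g)=\int g\,\mathrm d\rho$, $\operatorname{std}(g)=(\int|g-\operatorname{mean}(g)|^2\mathrm d\rho)^{1/2}$. $\mathcal P_c^*(\mathbb R^2)$ is the set of compactly supported Borel probability measures on $\mathbb R^2$ whose support has affine hull of dimension $>1$. For such $\mu$: $\mathcal N_\theta[\mu](t)=\big(\widehat{\mathcal R}_\theta[\mu](t)-\operatorname{mean}(\widehat{\mathcal R}_\theta[\mu])\big)/\operatorname{std}(\widehat{\mathcal R}_\theta[\mu])$ and $\mathcal N_{\mathrm m}[\mu](t)=\sup_{\theta\in\mathbb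 S_1}\mathcal N_\theta[\mu](t)$, $t\in\mathbb R$. *)

theory Defs
  imports "HOL-Probability.Probability"
begin

definition msupp :: "'a::topological_space measure \<Rightarrow> 'a set" where
  "msupp \<mu> = {x. \<forall>U. open U \<and> x \<in> U \<longrightarrow> emeasure \<mu> U > 0}"

definition Pc_star :: "(real^2) measure \<Rightarrow> bool" where
  "Pc_star \<mu> \<longleftrightarrow> prob_space \<mu> \<and> sets \<mu> = sets borel \<and>
     compact (msupp \<mu>) \<and> aff_dim (msupp \<mu>) > 1"

definition radon :: "real^2 \<Rightarrow> (real^2) measure \<Rightarrow> real measure" where
  "radon \<theta> \<mu> = distr \<mu> borel (\<lambda>x. x \<bullet> \<theta>)"

text \<open>Generalised inverse F^[-1](t) = inf {s. F s > t}, with values in the extended reals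
  (so that inf of the empty set is +infinity).\<close>
definition pinv :: "(real \<Rightarrow> real) \<Rightarrow> real \<Rightarrow> ereal" where
  "pinv F t = Inf {ereal s | s. F s > t}"

definition CDT :: "real measure \<Rightarrow> real measure \<Rightarrow> real \<Rightarrow> ereal" where
  "CDT \<rho> \<nu> = (\<lambda>t. pinv (cdf \<nu>) (cdf \<rho> t))"

definition mean_rho :: "real measure \<Rightarrow> (real \<Rightarrow> ereal) \<Rightarrow> real" where
  "mean_rho \<rho> g = (\<integral>x. real_of_ereal (g x) \<partial>\<rho>)"

definition std_rho :: "real measure \<Rightarrow> (real \<Rightarrow> ereal) \<Rightarrow> real" where
  "std_rho \<rho> g = sqrt (\<integral>x. (real_of_ereal (g x) - mean_rho \<rho> g)\<^sup>2 \<partial>\<rho>)"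

definition N_theta :: "real measure \<Rightarrow> real^2 \<Rightarrow> (real^2) measure \<Rightarrow> real \<Rightarrow> ereal" where
  "N_theta \<rho> \<theta> \<mu> t =
     (let g = CDT \<rho> (radon \<theta> \<mu>) in (g t - ereal (mean_rho \<rho> g)) / ereal (std_rho \<rho> g))"

definition N_max :: "real measure \<Rightarrow> (real^2) measure \<Rightarrow> real \<Rightarrow> ereal" where
  "N_max \<rho> \<mu> t = (SUP \<theta> \<in> sphere (0::real^2) 1. N_theta \<rho> \<theta> \<mu> t)"

end

theory Submission
  imports Defs
begin

text \<open>If \<open>\<mu>\<close> is pushed forward by \<open>x \<mapsto> A x + y\<close>, its projection onto \<open>\<theta>\<close> is
  the projection of \<open>\<mu>\<close> onto \<open>\<phi> = A\<^sup>T\<theta> / |A\<^sup>T\<theta>|\<close>, pushed forward by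
  \<open>s \<mapsto> |A\<^sup>T\<theta>| s + y\<bullet>\<theta>\<close>. The CDT commutes with increasing affine maps of the line, and
  standardizing by mean and standard deviation removes such maps, provided the CDT is finite
  \<open>\<rho>\<close>-a.e.; this holds because \<open>\<mu>\<close> has compact support and \<open>\<rho>\<close> has no atoms.
  Since \<open>\<theta> \<mapsto> \<phi>\<close> is a bijection of the unit circle, the two suprema coincide.\<close>

lemma Inf_ereal_affine:
  fixes X :: "ereal set"
  assumes "r > 0"
  shows "Inf ((\<lambda>x. ereal r * x + ereal c) ` X) = ereal r * Inf X + ereal c"
proof (rule mono_bij_Inf[symmetric])
  show "mono (\<lambda>x. ereal r * x + ereal c)"
    using assms by (intro monoI add_right_mono ereal_mult_left_mono) auto
  show "bij (\<lambda>x. ereal r * x + ereal c)"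
  proof (rule bij_betw_byWitness[where f' = "\<lambda>x. (x - ereal c) / ereal r"])
    have "(ereal r * x + ereal c - ereal c) / ereal r = x"
      "ereal r * ((x - ereal c) / ereal r) + ereal c = x" for x
      using assms by (cases x; simp)+
    then show "\<forall>x\<in>UNIV. (ereal r * x + ereal c - ereal c) / ereal r = x"
      "\<forall>x\<in>UNIV. ereal r * ((x - ereal c) / ereal r) + ereal c = x"
      by auto
  qed auto
qed

lemma borel_measurable_mono_linorder:
  fixes g :: "real \<Rightarrow> 'b::{linorder_topology, second_countable_topology}"
  assumes "mono g"
  shows "g \<in> borel_measurable borel"
proof (rule borel_measurableI_le)
  fix y
  have "is_interval {x. g x \<le> y}"
    unfolding is_interval_1 using assms by (auto dest: monoD intro: order_trans)
  then show "{x \<in> space borel. g x \<le> y} \<in> sets borel"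
    by (simp add: real_interval_borel_measurable)
qed

lemma pinv_mono: "mono (pinv F)"
  unfolding pinv_def by (intro monoI Inf_superset_mono) auto

lemma pinv_affine:
  assumes "r > 0"
  shows "pinv (\<lambda>x. F ((x - c) / r)) u = ereal r * pinv F u + ereal c"
proof -
  have "{ereal s |s. F ((s - c) / r) > u} = (\<lambda>x. ereal r * x + ereal c) ` {ereal s |s. F s > u}"
  proof (intro equalityI subsetI)
    fix x assume "x \<in> {ereal s |s. F ((s - c) / r) > u}"
    then obtain s where "x = ereal (r * ((s - c) / r) + c)" "F ((s - c) / r) > u"
      using assms by auto
    then show "x \<in> (\<lambda>x. ereal r * x + ereal c) ` {ereal s |s. F s > u}"
      by force
  qed (use assms in auto)
  then show ?thesis
    unfolding pinv_def by (simp add: Inf_ereal_affine assms)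
qed

lemma cdf_distr_affine:
  assumes "sets \<nu> = sets borel" and "r > 0"
  shows "cdf (distr \<nu> borel (\<lambda>s. r * s + c)) x = cdf \<nu> ((x - c) / r)"
proof -
  have "(\<lambda>s. r * s + c) -` {..x} \<inter> space \<nu> = {..(x - c) / r}"
    using assms by (auto simp: sets_eq_imp_space_eq[OF assms(1)] field_simps)
  then show ?thesis
    unfolding cdf_def using assms(1) by (simp add: measure_distr)
qed

lemma CDT_distr_affine:
  assumes "sets \<nu> = sets borel" and "r > 0"
  shows "CDT \<rho> (distr \<nu> borel (\<lambda>s. r * s + c)) t = ereal r * CDT \<rho> \<nu> t + ereal c"
  unfolding CDT_def cdf_distr_affine[OF assms] using assms(2) by (rule pinv_affine)

lemma CDT_mono:
  assumes "real_distribution \<rho>"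
  shows "mono (CDT \<rho> \<nu>)"
proof -
  interpret real_distribution \<rho> by fact
  show ?thesis
    unfolding CDT_def by (intro monoI monoD[OF pinv_mono] cdf_nondecreasing)
qed

lemma CDT_bounds:
  assumes "real_distribution \<nu>" and "AE s in \<nu>. s \<in> {a..b}" and "cdf \<rho> t < 1"
  shows "CDT \<rho> \<nu> t \<in> {ereal a..ereal b}"
proof -
  interpret real_distribution \<nu> by fact
  have "cdf \<nu> s = 0" if "s < a" for s
    unfolding cdf_def using assms(2) that by (subst prob_eq_0) (auto elim!: AE_mp)
  moreover have "cdf \<nu> b = 1"
    unfolding cdf_def using assms(2) by (subst prob_eq_1) (auto elim!: AE_mp)
  moreover have "cdf \<rho> t \<ge> 0"
    by (simp add: cdf_def)
  ultimately have "ereal a \<le> pinv (cdf \<nu>) (cdf \<rho> t)"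
    unfolding pinv_def by (force intro!: Inf_greatest simp: not_le[symmetric])
  moreover have "pinv (cdf \<nu>) (cdf \<rho> t) \<le> ereal b"
    unfolding pinv_def using \<open>cdf \<nu> b = 1\<close> assms(3) by (auto intro!: Inf_lower)
  ultimately show ?thesis
    unfolding CDT_def by simp
qed

lemma (in real_distribution) AE_cdf_less_1:
  assumes atomless: "\<And>x. emeasure M {x} = 0"
  shows "AE t in M. cdf M t < 1"
proof (cases "\<exists>t. cdf M t \<ge> 1")
  case False
  then show ?thesis by (simp add: not_le)
next
  case True
  define T where "T = {t. 1 \<le> cdf M t}"
  have "continuous_on UNIV (cdf M)"
    using atomless by (intro continuous_at_imp_continuous_on) (simp add: isCont_cdf measure_def)
  then have "closed T"
    unfolding T_def by (intro closed_Collect_le continuous_on_const)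
  moreover have "bdd_below T"
  proof -
    have "\<forall>\<^sub>F t in at_bot. cdf M t < 1"
      using cdf_lim_at_bot by (rule order_tendstoD) simp
    then obtain b where "\<And>t. t \<le> b \<Longrightarrow> cdf M t < 1"
      by (auto simp: eventually_at_bot_linorder)
    then have "b \<le> t" if "t \<in> T" for t
      using that unfolding T_def by (metis mem_Collect_eq not_le less_imp_le)
    then show ?thesis
      by (rule bdd_belowI)
  qed
  moreover have "T \<noteq> {}"
    using True by (auto simp: T_def)
  ultimately have t0: "Inf T \<in> T"
    using closed_contains_Inf by blast
  have "prob {..Inf T} = 1"
    using t0 by (intro antisym prob_le_1) (simp add: T_def cdf_def)
  then have "AE t in M. t \<in> {..Inf T}"
    by (simp add: prob_eq_1)
  moreover have "AE t in M. t \<notin> {Inf T}"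
    using atomless by (subst prob_eq_0[symmetric]) (auto simp: measure_def)
  ultimately show ?thesis
  proof eventually_elim
    case (elim t)
    then have "t < Inf T" by auto
    then have "t \<notin> T"
      using \<open>bdd_below T\<close> cInf_lower not_le by blast
    then show ?case
      by (simp add: T_def)
  qed
qed

definition standardize :: "real measure \<Rightarrow> (real \<Rightarrow> ereal) \<Rightarrow> real \<Rightarrow> ereal" where
  "standardize \<rho> g t = (g t - ereal (mean_rho \<rho> g)) / ereal (std_rho \<rho> g)"

lemma ereal_standardize_affine:
  fixes x :: ereal
  assumes "r > 0"
  shows "(ereal r * x + ereal c - ereal (r * m + c)) / ereal (r * s) = (x - ereal m) / ereal s"
  using assms by (cases x; cases "s = 0") (auto simp: divide_ereal_def field_simps zero_less_mult_iff)

text \<open>Since \<open>real_of_ereal\<close> sends \<open>\<plusminus>\<infinity>\<close> to \<open>0\<close>, mean and standard deviation only see the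
  affine change of \<open>g\<close> where \<open>g\<close> is finite; hence the a.e. bound.\<close>
lemma standardize_affine:
  assumes "prob_space \<rho>" and g: "g \<in> borel_measurable \<rho>"
    and bounded: "AE t in \<rho>. g t \<in> {ereal a..ereal b}" and "r > 0"
  shows "standardize \<rho> (\<lambda>t. ereal r * g t + ereal c) = standardize \<rho> g"
proof -
  interpret prob_space \<rho> by fact
  define k where "k t = real_of_ereal (g t)" for t
  have g_finite: "AE t in \<rho>. g t = ereal (k t)"
  proof (rule AE_mp[OF bounded], intro AE_I2 impI)
    fix t assume "g t \<in> {ereal a..ereal b}"
    then show "g t = ereal (k t)" by (cases "g t") (auto simp: k_def)
  qed
  have k[measurable]: "k \<in> borel_measurable \<rho>"
    unfolding k_def using g by measurable
  have "AE t in \<rho>. norm (k t) \<le> max \<bar>a\<bar> \<bar>b\<bar>"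
    using bounded g_finite by eventually_elim auto
  then have "integrable \<rho> k"
    using k by (rule integrable_const_bound)
  have mean_k: "mean_rho \<rho> g = (\<integral>t. k t \<partial>\<rho>)"
    by (simp add: mean_rho_def k_def)
  have mean: "mean_rho \<rho> (\<lambda>t. ereal r * g t + ereal c) = r * mean_rho \<rho> g + c"
  proof -
    have "mean_rho \<rho> (\<lambda>t. ereal r * g t + ereal c) = (\<integral>t. r * k t + c \<partial>\<rho>)"
      unfolding mean_rho_def using g g_finite
      by (intro integral_cong_AE) (auto elim!: AE_mp)
    also have "\<dots> = r * mean_rho \<rho> g + c"
      using \<open>integrable \<rho> k\<close> by (simp add: mean_k prob_space)
    finally show ?thesis .
  qed
  have std: "std_rho \<rho> (\<lambda>t. ereal r * g t + ereal c) = r * std_rho \<rho> g"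
  proof -
    have "std_rho \<rho> (\<lambda>t. ereal r * g t + ereal c)
        = sqrt (\<integral>t. r\<^sup>2 * (k t - mean_rho \<rho> g)\<^sup>2 \<partial>\<rho>)"
      unfolding std_rho_def mean using g g_finite
      by (intro arg_cong[where f = sqrt] integral_cong_AE)
         (auto elim!: AE_mp simp: power2_eq_square algebra_simps)
    also have "\<dots> = r * std_rho \<rho> g"
      using \<open>r > 0\<close> by (simp add: std_rho_def k_def real_sqrt_mult)
    finally show ?thesis .
  qed
  show ?thesis
    unfolding standardize_def mean std using \<open>r > 0\<close> by (simp add: ereal_standardize_affine)
qed

lemma standardize_CDT_distr_affine:
  assumes "real_distribution \<rho>" and "\<And>x. emeasure \<rho> {x} = 0"
    and "real_distribution \<nu>" and "AE s in \<nu>. s \<in> {a..b}" and "r > 0"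
  shows "standardize \<rho> (CDT \<rho> (distr \<nu> borel (\<lambda>s. r * s + c))) = standardize \<rho> (CDT \<rho> \<nu>)"
proof -
  interpret rho: real_distribution \<rho> by fact
  have "CDT \<rho> (distr \<nu> borel (\<lambda>s. r * s + c)) = (\<lambda>t. ereal r * CDT \<rho> \<nu> t + ereal c)"
    using assms(3,5) by (simp add: fun_eq_iff CDT_distr_affine real_distribution.events_eq_borel)
  moreover have "CDT \<rho> \<nu> \<in> borel_measurable \<rho>"
    using borel_measurable_mono_linorder[OF CDT_mono[OF assms(1)]] by simp
  moreover have "AE t in \<rho>. CDT \<rho> \<nu> t \<in> {ereal a..ereal b}"
    using rho.AE_cdf_less_1[OF assms(2)] by eventually_elim (rule CDT_bounds[OF assms(3,4)])
  ultimately show ?thesis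
    using assms(5) by (simp add: standardize_affine rho.prob_space_axioms)
qed

lemma N_theta_eq_standardize: "N_theta \<rho> \<theta> \<mu> = standardize \<rho> (CDT \<rho> (radon \<theta> \<mu>))"
  by (simp add: N_theta_def standardize_def fun_eq_iff Let_def)

lemma AE_in_msupp:
  fixes \<mu> :: "'a::second_countable_topology measure"
  assumes "sets \<mu> = sets borel"
  shows "AE x in \<mu>. x \<in> msupp \<mu>"
proof -
  define F where "F = {U. open U \<and> emeasure \<mu> U = 0}"
  obtain F' where F': "F' \<subseteq> F" "countable F'" "\<Union>F' = \<Union>F"
    using Lindelof[of F] unfolding F_def by blast
  have "(\<Union>U\<in>F'. U) \<in> null_sets \<mu>"
    using F' assms by (intro null_sets_UN') (auto simp: F_def null_sets_def)
  moreover have "- msupp \<mu> \<subseteq> \<Union>F'"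
    unfolding F'(3) by (auto simp: F_def msupp_def not_less)
  ultimately show ?thesis
    by (intro AE_I'[of "\<Union>F'"]) auto
qed

lemma real_distribution_radon:
  assumes "prob_space \<mu>" and "sets \<mu> = sets borel"
  shows "real_distribution (radon \<theta> \<mu>)"
proof -
  interpret prob_space \<mu> by fact
  show ?thesis
    unfolding radon_def using assms(2) by (intro real_distribution_distr) simp
qed

lemma AE_radon_bounded:
  assumes "sets \<mu> = sets borel" and "AE x in \<mu>. norm x \<le> R" and "norm \<theta> = 1"
  shows "AE s in radon \<theta> \<mu>. s \<in> {-R..R}"
  unfolding radon_def
proof (subst AE_distr_iff)
  show "AE x in \<mu>. x \<bullet> \<theta> \<in> {-R..R}"
    using assms(2)
  proof eventually_elim
    case (elim x)
    then show ?case
      using Cauchy_Schwarz_ineq2[of x \<theta>] assms(3) by auto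
  qed
qed (use assms(1) in auto)

lemma inner_matrix_vector_mul_transpose:
  fixes A :: "real^'n^'m"
  shows "(A *v x) \<bullet> y = x \<bullet> (transpose A *v y)"
  by (metis dot_lmul_matrix vector_transpose_matrix)

lemma radon_distr_affine:
  fixes A :: "real^2^2"
  assumes "sets \<mu> = sets borel" and "transpose A *v \<theta> = r *\<^sub>R \<phi>"
  shows "radon \<theta> (distr \<mu> borel (\<lambda>x. A *v x + y)) = distr (radon \<phi> \<mu>) borel (\<lambda>s. r * s + y \<bullet> \<theta>)"
proof -
  have "(A *v x + y) \<bullet> \<theta> = r * (x \<bullet> \<phi>) + y \<bullet> \<theta>" for x
    using assms(2) by (simp add: inner_add_left inner_matrix_vector_mul_transpose)
  moreover have "(\<lambda>x. A *v x + y) \<in> borel_measurable borel"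
    by (intro borel_measurable_continuous_onI continuous_intros linear_continuous_on
        matrix_vector_mul_bounded_linear)
  ultimately show ?thesis
    unfolding radon_def using assms(1)
    by (simp add: distr_distr measurable_cong_sets[OF assms(1) refl] comp_def)
qed

lemma sgn_linear_image_sphere:
  fixes L :: "'a::real_normed_vector \<Rightarrow> 'a"
  assumes "linear L" and "bij L"
  shows "(\<lambda>\<theta>. sgn (L \<theta>)) ` sphere 0 1 = sphere 0 1"
proof
  show "(\<lambda>\<theta>. sgn (L \<theta>)) ` sphere 0 1 \<subseteq> sphere 0 1"
  proof (rule image_subsetI)
    fix \<theta> :: 'a assume "\<theta> \<in> sphere 0 1"
    then have "L \<theta> \<noteq> 0"
      using assms linear_0[OF assms(1)] by (metis bij_pointE mem_sphere_0 norm_zero zero_neq_one)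
    then show "sgn (L \<theta>) \<in> sphere 0 1"
      by (simp add: norm_sgn)
  qed
next
  show "sphere 0 1 \<subseteq> (\<lambda>\<theta>. sgn (L \<theta>)) ` sphere 0 1"
  proof
    fix \<phi> :: 'a assume \<phi>: "\<phi> \<in> sphere 0 1"
    define v where "v = inv L \<phi>"
    have "L v = \<phi>"
      unfolding v_def using assms(2) by (simp add: bij_is_surj surj_f_inv_f)
    then have "v \<noteq> 0"
      using \<phi> linear_0[OF assms(1)] by auto
    have "sgn (L (sgn v)) = \<phi>"
      using \<open>L v = \<phi>\<close> \<phi> \<open>v \<noteq> 0\<close>
      by (simp add: sgn_div_norm linear_scale[OF assms(1)] sgn_scaleR)
    moreover have "sgn v \<in> sphere 0 1"
      using \<open>v \<noteq> 0\<close> by (simp add: norm_sgn)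
    ultimately show "\<phi> \<in> (\<lambda>\<theta>. sgn (L \<theta>)) ` sphere 0 1"
      by (metis image_eqI)
  qed
qed

lemma N_theta_distr_affine:
  fixes A :: "real^2^2"
  assumes \<rho>: "real_distribution \<rho>" "\<And>x. emeasure \<rho> {x} = 0"
    and \<mu>: "prob_space \<mu>" "sets \<mu> = sets borel" "AE x in \<mu>. norm x \<le> R"
    and "invertible A" and "norm \<theta> = 1"
  shows "N_theta \<rho> \<theta> (distr \<mu> borel (\<lambda>x. A *v x + y)) = N_theta \<rho> (sgn (transpose A *v \<theta>)) \<mu>"
proof -
  define \<phi> where "\<phi> = sgn (transpose A *v \<theta>)"
  have "transpose A *v \<theta> \<noteq> 0"
    using \<open>invertible A\<close> \<open>norm \<theta> = 1\<close> transpose_invertible[of A]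
    by (metis invertible_eq_bij bij_pointE matrix_vector_mult_0_right norm_zero zero_neq_one)
  then have r: "norm (transpose A *v \<theta>) > 0"
    and scale: "transpose A *v \<theta> = norm (transpose A *v \<theta>) *\<^sub>R \<phi>"
    and "norm \<phi> = 1"
    by (simp_all add: \<phi>_def sgn_div_norm norm_sgn)
  show ?thesis
    unfolding N_theta_eq_standardize \<phi>_def[symmetric] radon_distr_affine[OF \<mu>(2) scale]
    by (rule standardize_CDT_distr_affine[OF \<rho> real_distribution_radon[OF \<mu>(1,2)]
          AE_radon_bounded[OF \<mu>(2,3) \<open>norm \<phi> = 1\<close>] r])
qed

theorem proposition8:
  fixes \<rho> :: "real measure" and \<mu> :: "(real^2) measure"
    and A :: "real^2^2" and y :: "real^2"
  assumes "prob_space \<rho>" and "sets \<rho> = sets borel" and "\<And>x. emeasure \<rho> {x} = 0"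
    and "Pc_star \<mu>" and "invertible A"
  shows "N_max \<rho> (distr \<mu> borel (\<lambda>x. A *v x + y)) = N_max \<rho> \<mu>"
proof
  fix t
  have \<rho>: "real_distribution \<rho>"
    using assms(1,2) by (simp add: real_distribution_def real_distribution_axioms_def)
  have \<mu>: "prob_space \<mu>" "sets \<mu> = sets borel" "compact (msupp \<mu>)"
    using assms(4) by (auto simp: Pc_star_def)
  obtain R where R: "\<And>x. x \<in> msupp \<mu> \<Longrightarrow> norm x \<le> R"
    using compact_imp_bounded[OF \<mu>(3)] by (auto simp: bounded_iff)
  have bounded: "AE x in \<mu>. norm x \<le> R"
    using AE_in_msupp[OF \<mu>(2)] by eventually_elim (rule R)
  define f where "f \<theta> = sgn (transpose A *v \<theta>)" for \<theta> :: "real^2"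
  have "f ` sphere 0 1 = sphere 0 1"
    unfolding f_def using transpose_invertible[OF assms(5)]
    by (intro sgn_linear_image_sphere matrix_vector_mul_linear) (simp only: invertible_eq_bij)
  have "N_max \<rho> (distr \<mu> borel (\<lambda>x. A *v x + y)) t = (SUP \<theta> \<in> sphere 0 1. N_theta \<rho> (f \<theta>) \<mu> t)"
    unfolding N_max_def f_def
    using N_theta_distr_affine[OF \<rho> assms(3) \<mu>(1,2) bounded assms(5)] by simp
  also have "\<dots> = (SUP \<phi> \<in> f ` sphere 0 1. N_theta \<rho> \<phi> \<mu> t)"
    by (simp add: image_image)
  also have "\<dots> = N_max \<rho> \<mu> t"
    unfolding \<open>f ` sphere 0 1 = sphere 0 1\<close> N_max_def ..
  finally show "N_max \<rho> (distr \<mu> borel (\<lambda>x. A *v x + y)) t = N_max \<rho> \<mu> t" .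
qed

end
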